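(* Let $d\ge 1$, $n\ge 1$, and let $\mathbb{K}=\mathbb{Q}=\{h_1,\dots,h_n\}\subset\mathbb{R}^d$ be a set of $n$ pairwise distinct node representations. Consider the GATv2 family of scoring functions $$\mathcal{F}_{\mathrm{GATv2}}=\{e_{a,W,b} : d'\ge 1,\ a\in\mathbb{R}^{d'},\ W\in\mathbb{R}^{d'\times 2d},\ b\in\mathbb{R}^{d'}\},\qquad e_{a,W,b}(h_i,h_j)=a^{\top}\,\mathrm{LeakyReLU}\big(W[\,h_i\,\|\,h_j\,]+b\big),$$ with attention coefficients obtained by softmax normalization over keys. Then this family computes dynamic attention for $\mathbb{K}$ and $\mathbb{Q}$: for every map $\varphi:[n]\to[n]$ there exist parameters such that $e(h_i,h_{\varphi(i)})>e(h_i,h_j)$ (and hence $\alpha_{i\varphi(i)}>\alpha_{ij}$) for all $i\in[n]$ and all $j\neq\varphi(i)$.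
   Context: Here $\|$ denotes vector concatenation, $\mathrm{LeakyReLU}$ is applied coordinatewise with $\mathrm{LeakyReLU}(x)=x$ for $x\ge0$ and $cx$ for $x<0$ with a fixed slope $0<c<1$, and $[n]=\{1,\dots,n\}$. Dynamic scoring: a family $\mathcal{F}$ of functions $\mathbb{R}^d\times\mathbb{R}^d\to\mathbb{R}$ computes dynamic scoring for keys $\{k_1,\dots,k_n\}$ and queries $\{q_1,\dots,q_m\}$ if for every map $\varphi:[m]\to[n]$ there is $f\in\mathcal{F}$ with $f(q_i,k_{\varphi(i)})>f(q_i,k_j)$ for all $i\in[m]$ and all $j\neq\varphi(i)$. A family of attention functions computes dynamic attention if its scoring family computes dynamic scoring, possibly followed by a monotonic normalization such as softmax; the attention coefficients are $\alpha_{ij}=\exp(e(h_i,h_j))/\sum_{j'}\exp(e(h_i,h_{j'}))$. *)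

theory Defs
  imports Complex_Main
begin

text \<open>Vectors in R^k are represented as functions nat => real, of which only the
coordinates 0..k-1 are meaningful. Node indices range over {1..n}.\<close>

definition leaky_relu :: "real \<Rightarrow> real \<Rightarrow> real" where
  "leaky_relu c x = (if x \<ge> 0 then x else c * x)"

definition vconcat :: "nat \<Rightarrow> (nat \<Rightarrow> real) \<Rightarrow> (nat \<Rightarrow> real) \<Rightarrow> nat \<Rightarrow> real" where
  "vconcat d u v = (\<lambda>k. if k < d then u k else v (k - d))"

definition gatv2_score ::
  "real \<Rightarrow> nat \<Rightarrow> nat \<Rightarrow> (nat \<Rightarrow> real) \<Rightarrow> (nat \<Rightarrow> nat \<Rightarrow> real) \<Rightarrow> (nat \<Rightarrow> real)
     \<Rightarrow> (nat \<Rightarrow> real) \<Rightarrow> (nat \<Rightarrow> real) \<Rightarrow> real" where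
  "gatv2_score c d d' a W b x y =
     (\<Sum>r<d'. a r * leaky_relu c ((\<Sum>k<2*d. W r k * vconcat d x y k) + b r))"

definition gatv2_family :: "real \<Rightarrow> nat \<Rightarrow> ((nat \<Rightarrow> real) \<Rightarrow> (nat \<Rightarrow> real) \<Rightarrow> real) set" where
  "gatv2_family c d = {gatv2_score c d d' a W b | d' a W b. d' \<ge> 1}"

definition computes_dynamic_scoring ::
  "((nat \<Rightarrow> real) \<Rightarrow> (nat \<Rightarrow> real) \<Rightarrow> real) set \<Rightarrow> nat \<Rightarrow> (nat \<Rightarrow> nat \<Rightarrow> real)
     \<Rightarrow> nat \<Rightarrow> (nat \<Rightarrow> nat \<Rightarrow> real) \<Rightarrow> bool" where
  "computes_dynamic_scoring F n k m q \<longleftrightarrow>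
     (\<forall>\<phi>. (\<forall>i\<in>{1..m}. \<phi> i \<in> {1..n}) \<longrightarrow>
        (\<exists>f\<in>F. \<forall>i\<in>{1..m}. \<forall>j\<in>{1..n}. j \<noteq> \<phi> i \<longrightarrow> f (q i) (k (\<phi> i)) > f (q i) (k j)))"

definition attn_coeff ::
  "((nat \<Rightarrow> real) \<Rightarrow> (nat \<Rightarrow> real) \<Rightarrow> real) \<Rightarrow> nat \<Rightarrow> (nat \<Rightarrow> nat \<Rightarrow> real) \<Rightarrow> nat \<Rightarrow> nat \<Rightarrow> real" where
  "attn_coeff e n h i j = exp (e (h i) (h j)) / (\<Sum>j'\<in>{1..n}. exp (e (h i) (h j')))"

end

theory Submission
  imports Defs
begin

text \<open>
  Choose a linear functional \<open>z\<close> on concatenations \<open>[x || y]\<close> that separates every target pair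
  \<open>(h i, h (\<phi> i))\<close> from every other pair \<open>(h i, h j)\<close>; a point \<open>(1, t, t\<^sup>2, \<dots>)\<close> of the moment
  curve works for all but finitely many \<open>t\<close>. The combination
  \<open>LeakyReLU (u + \<delta>) - 2 LeakyReLU u + LeakyReLU (u - \<delta>)\<close> is \<open>1 - c\<close> times the ReLU hat of
  width \<open>\<delta>\<close>: nonnegative, positive at \<open>0\<close> and zero for \<open>\<bar>u\<bar> \<ge> \<delta>\<close>. Summing such hats of \<open>z\<close>,
  centred at the values of \<open>z\<close> on the target pairs and with \<open>\<delta>\<close> below every gap to a
  non-target value, is a GATv2 score (three hidden units per hat, every row of \<open>W\<close> equal to
  \<open>z\<close>) that is positive on the targets and zero elsewhere. Softmax preserves strict
  inequalities.
\<close>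

lemma ex_common_nonroot:
  fixes v :: "'p \<Rightarrow> nat \<Rightarrow> 'a::{idom,real_normed_div_algebra}"
  assumes "finite P" and "\<forall>p\<in>P. \<exists>k<D. v p k \<noteq> 0"
  shows "\<exists>t. \<forall>p\<in>P. (\<Sum>k<D. v p k * t ^ k) \<noteq> 0"
proof -
  have "finite {t. (\<Sum>k<D. v p k * t ^ k) = 0}" if "p \<in> P" for p
  proof -
    from assms(2) that obtain k where "k < D" "v p k \<noteq> 0" by auto
    then obtain m where "D = Suc m" "k \<le> m" by (cases D) auto
    with \<open>v p k \<noteq> 0\<close> show ?thesis
      by (simp add: lessThan_Suc_atMost polyfun_roots_finite)
  qed
  with assms(1) have "finite (\<Union>p\<in>P. {t. (\<Sum>k<D. v p k * t ^ k) = 0})"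
    by (intro finite_UN_I)
  from ex_new_if_finite[OF infinite_UNIV_char_0 this]
  obtain t where "t \<notin> (\<Union>p\<in>P. {t. (\<Sum>k<D. v p k * t ^ k) = 0})"
    by (elim exE)
  then show ?thesis by auto
qed

lemma ex_separating_functional:
  fixes u v :: "'i \<Rightarrow> nat \<Rightarrow> 'a::{idom,real_normed_div_algebra}"
  assumes "finite I" and "\<forall>i\<in>I. \<exists>k<D. u i k \<noteq> v i k"
  shows "\<exists>w. \<forall>i\<in>I. (\<Sum>k<D. w k * u i k) \<noteq> (\<Sum>k<D. w k * v i k)"
proof -
  from assms(2) have "\<forall>i\<in>I. \<exists>k<D. u i k - v i k \<noteq> 0" by simp
  from ex_common_nonroot[OF assms(1) this]
  obtain t where t: "\<forall>i\<in>I. (\<Sum>k<D. (u i k - v i k) * t ^ k) \<noteq> 0"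
    by (elim exE)
  have "(\<Sum>k<D. (u i k - v i k) * t ^ k) = (\<Sum>k<D. t ^ k * u i k) - (\<Sum>k<D. t ^ k * v i k)" for i
    by (simp add: sum_subtractf[symmetric] algebra_simps)
  with t show ?thesis
    by (intro exI[of _ "\<lambda>k. t ^ k"]) auto
qed

lemma ex_pos_le_abs:
  fixes S :: "real set"
  assumes "finite S" and "0 \<notin> S"
  shows "\<exists>\<delta>>0. \<forall>s\<in>S. \<delta> \<le> \<bar>s\<bar>"
proof (intro exI conjI ballI)
  show "0 < Min (insert 1 (abs ` S))"
    using assms by (auto simp: Min_gr_iff)
  show "Min (insert 1 (abs ` S)) \<le> \<bar>s\<bar>" if "s \<in> S" for s
    using assms(1) that by (intro Min_le) auto
qed

definition leaky_hat :: "real \<Rightarrow> real \<Rightarrow> real \<Rightarrow> real" where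
  "leaky_hat c \<delta> u = leaky_relu c (u + \<delta>) - 2 * leaky_relu c u + leaky_relu c (u - \<delta>)"

lemma leaky_relu_eq_linear_plus_relu: "leaky_relu c x = c * x + (1 - c) * max 0 x"
  unfolding leaky_relu_def by (auto simp: max_def algebra_simps)

lemma leaky_hat_eq_relu_hat:
  "leaky_hat c \<delta> u = (1 - c) * (max 0 (u + \<delta>) - 2 * max 0 u + max 0 (u - \<delta>))"
  unfolding leaky_hat_def leaky_relu_eq_linear_plus_relu by (simp add: algebra_simps)

lemma leaky_hat_nonneg:
  assumes "c \<le> 1" and "0 \<le> \<delta>"
  shows "0 \<le> leaky_hat c \<delta> u"
proof -
  have "0 \<le> max 0 (u + \<delta>) - 2 * max 0 u + max 0 (u - \<delta>)"
    using assms(2) by (simp add: max_def)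
  with assms(1) show ?thesis
    unfolding leaky_hat_eq_relu_hat by simp
qed

lemma leaky_hat_zero_pos:
  assumes "c < 1" and "0 < \<delta>"
  shows "0 < leaky_hat c \<delta> 0"
  using assms unfolding leaky_hat_eq_relu_hat by simp

lemma leaky_hat_eq_0:
  assumes "0 \<le> \<delta>" and "\<delta> \<le> \<bar>u\<bar>"
  shows "leaky_hat c \<delta> u = 0"
  using assms unfolding leaky_hat_eq_relu_hat by (auto simp: max_def abs_if)

lemma sum_leaky_hat_pos:
  fixes m :: nat
  assumes "c < 1" and "0 < \<delta>" and "k < m" and "T k = u"
  shows "0 < (\<Sum>i<m. leaky_hat c \<delta> (u - T i))"
proof -
  have "0 < leaky_hat c \<delta> (u - T k)"
    using leaky_hat_zero_pos[OF assms(1,2)] assms(4) by simp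
  also have "\<dots> \<le> (\<Sum>i<m. leaky_hat c \<delta> (u - T i))"
    using assms(1-3) by (intro member_le_sum leaky_hat_nonneg) simp_all
  finally show ?thesis .
qed

lemma sum_leaky_hat_eq_0:
  fixes m :: nat
  assumes "0 \<le> \<delta>" and "\<And>i. i < m \<Longrightarrow> \<delta> \<le> \<bar>u - T i\<bar>"
  shows "(\<Sum>i<m. leaky_hat c \<delta> (u - T i)) = 0"
  using assms leaky_hat_eq_0 by simp

text \<open>Hidden units \<open>3 i\<close>, \<open>3 i + 1\<close>, \<open>3 i + 2\<close> realise the \<open>i\<close>-th hat, centred at \<open>T i\<close>.\<close>

definition bump_out :: "nat \<Rightarrow> real" where
  "bump_out r = (if r mod 3 = 1 then -2 else 1)"

definition bump_bias :: "real \<Rightarrow> (nat \<Rightarrow> real) \<Rightarrow> nat \<Rightarrow> real" where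
  "bump_bias \<delta> T r = (if r mod 3 = 0 then \<delta> else if r mod 3 = 1 then 0 else - \<delta>) - T (r div 3)"

lemma gatv2_score_bump_network:
  "gatv2_score c d (3 * m) bump_out (\<lambda>r. w) (bump_bias \<delta> T) x y
     = (\<Sum>i<m. leaky_hat c \<delta> ((\<Sum>k<2*d. w k * vconcat d x y k) - T i))"
proof -
  let ?z = "\<Sum>k<2*d. w k * vconcat d x y k"
  let ?unit = "\<lambda>r. bump_out r * leaky_relu c (?z + bump_bias \<delta> T r)"
  have "(\<Sum>r\<in>{i*3..<i*3+3}. ?unit r) = leaky_hat c \<delta> (?z - T i)" for i
  proof -
    have "{i*3..<i*3+3} = {i*3, i*3+1, i*3+2}" by auto
    moreover have "(i*3) mod 3 = 0" "(i*3+1) mod 3 = 1" "(i*3+2) mod 3 = 2"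
      "(i*3) div 3 = i" "(i*3+1) div 3 = i" "(i*3+2) div 3 = i" by presburger+
    ultimately show ?thesis
      by (simp add: bump_out_def bump_bias_def leaky_hat_def algebra_simps)
  qed
  then have "(\<Sum>r<m*3. ?unit r) = (\<Sum>i<m. leaky_hat c \<delta> (?z - T i))"
    by (simp only: sum.nat_group[symmetric])
  then show ?thesis
    unfolding gatv2_score_def by (simp only: mult.commute[of 3 m])
qed

lemma ex_functional_separating_vconcat:
  fixes P N :: "((nat \<Rightarrow> real) \<times> (nat \<Rightarrow> real)) set"
  assumes "finite P" and "finite N"
    and "\<forall>p\<in>P. \<forall>q\<in>N. \<exists>k<d. fst p k \<noteq> fst q k \<or> snd p k \<noteq> snd q k"
  shows "\<exists>w. \<forall>p\<in>P. \<forall>q\<in>N. (\<Sum>k<2*d. w k * vconcat d (fst p) (snd p) k)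
                          \<noteq> (\<Sum>k<2*d. w k * vconcat d (fst q) (snd q) k)"
proof -
  let ?cat = "\<lambda>p. vconcat d (fst p) (snd p)"
  have "\<exists>k<2*d. ?cat p k \<noteq> ?cat q k" if "p \<in> P" "q \<in> N" for p q
  proof -
    from assms(3) that obtain k where "k < d" "fst p k \<noteq> fst q k \<or> snd p k \<noteq> snd q k"
      by auto
    then consider "k < d" "fst p k \<noteq> fst q k" | "k < d" "snd p k \<noteq> snd q k"
      by auto
    then show ?thesis
    proof cases
      case 1
      then show ?thesis by (intro exI[of _ k]) (simp add: vconcat_def)
    next
      case 2
      then show ?thesis by (intro exI[of _ "d + k"]) (simp add: vconcat_def)
    qed
  qed
  then have "\<forall>pq\<in>P \<times> N. \<exists>k<2*d. ?cat (fst pq) k \<noteq> ?cat (snd pq) k"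
    by auto
  from ex_separating_functional[OF _ this] assms(1,2) show ?thesis
    by auto
qed

lemma gatv2_bump_indicator:
  fixes P N :: "((nat \<Rightarrow> real) \<times> (nat \<Rightarrow> real)) set"
  assumes "c < 1" and "finite P" and "finite N" and "P \<noteq> {}"
    and "\<forall>p\<in>P. \<forall>q\<in>N. \<exists>k<d. fst p k \<noteq> fst q k \<or> snd p k \<noteq> snd q k"
  shows "\<exists>d' a W b. 1 \<le> d'
           \<and> (\<forall>p\<in>P. 0 < gatv2_score c d d' a W b (fst p) (snd p))
           \<and> (\<forall>q\<in>N. gatv2_score c d d' a W b (fst q) (snd q) = 0)"
proof -
  obtain w where w: "\<forall>p\<in>P. \<forall>q\<in>N. (\<Sum>k<2*d. w k * vconcat d (fst p) (snd p) k)
                                   \<noteq> (\<Sum>k<2*d. w k * vconcat d (fst q) (snd q) k)"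
    using ex_functional_separating_vconcat[OF assms(2,3,5)] by auto
  define z where "z p = (\<Sum>k<2*d. w k * vconcat d (fst p) (snd p) k)" for p
  have "z p \<noteq> z q" if "p \<in> P" "q \<in> N" for p q
    using w that by (simp add: z_def)
  then have "finite ((\<lambda>(p, q). z p - z q) ` (P \<times> N))" "0 \<notin> (\<lambda>(p, q). z p - z q) ` (P \<times> N)"
    using assms(2,3) by auto
  from ex_pos_le_abs[OF this] obtain \<delta> where "0 < \<delta>"
    and "\<forall>s\<in>(\<lambda>(p, q). z p - z q) ` (P \<times> N). \<delta> \<le> \<bar>s\<bar>"
    by auto
  then have \<delta>: "\<delta> \<le> \<bar>z q - z p\<bar>" if "p \<in> P" "q \<in> N" for p q
    using that by (auto simp: abs_minus_commute)
  obtain ps where ps: "set ps = P"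
    using assms(2) finite_list by auto
  define T where "T i = z (ps ! i)" for i
  let ?score = "gatv2_score c d (3 * length ps) bump_out (\<lambda>r. w) (bump_bias \<delta> T)"
  have score: "?score (fst p) (snd p) = (\<Sum>i<length ps. leaky_hat c \<delta> (z p - T i))" for p
    unfolding gatv2_score_bump_network z_def ..
  show ?thesis
  proof (intro exI conjI ballI)
    show "1 \<le> 3 * length ps"
      using ps assms(4) by (cases ps) auto
  next
    fix p assume "p \<in> P"
    then obtain i where "i < length ps" "T i = z p"
      using ps by (auto simp: in_set_conv_nth T_def)
    with assms(1) \<open>0 < \<delta>\<close> show "0 < ?score (fst p) (snd p)"
      unfolding score by (rule sum_leaky_hat_pos)
  next
    fix q assume "q \<in> N"
    have "\<delta> \<le> \<bar>z q - T i\<bar>" if "i < length ps" for i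
      unfolding T_def using nth_mem[OF that] ps by (intro \<delta>[OF _ \<open>q \<in> N\<close>]) simp
    with \<open>0 < \<delta>\<close> show "?score (fst q) (snd q) = 0"
      unfolding score by (intro sum_leaky_hat_eq_0) auto
  qed
qed

lemma gatv2_dynamic_scoring_params:
  fixes h :: "nat \<Rightarrow> nat \<Rightarrow> real"
  assumes "c < 1" and "n \<ge> 1"
    and distinct: "\<forall>i\<in>{1..n}. \<forall>j\<in>{1..n}. i \<noteq> j \<longrightarrow> (\<exists>k<d. h i k \<noteq> h j k)"
    and \<phi>: "\<forall>i\<in>{1..n}. \<phi> i \<in> {1..n}"
  shows "\<exists>d' a W b. d' \<ge> 1 \<and>
           (\<forall>i\<in>{1..n}. \<forall>j\<in>{1..n}. j \<noteq> \<phi> i \<longrightarrow>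
              gatv2_score c d d' a W b (h i) (h (\<phi> i)) > gatv2_score c d d' a W b (h i) (h j))"
proof -
  define P where "P = (\<lambda>i. (h i, h (\<phi> i))) ` {1..n}"
  define N where "N = (\<lambda>(i, j). (h i, h j)) ` {(i, j) \<in> {1..n} \<times> {1..n}. j \<noteq> \<phi> i}"
  have separated: "\<forall>p\<in>P. \<forall>q\<in>N. \<exists>k<d. fst p k \<noteq> fst q k \<or> snd p k \<noteq> snd q k"
  proof (intro ballI)
    fix p q assume "p \<in> P" "q \<in> N"
    from \<open>p \<in> P\<close> obtain i' where p: "p = (h i', h (\<phi> i'))" and i': "i' \<in> {1..n}"
      unfolding P_def by auto
    from \<open>q \<in> N\<close> obtain i j where q: "q = (h i, h j)"
      and ij: "i \<in> {1..n}" "j \<in> {1..n}" "j \<noteq> \<phi> i"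
      unfolding N_def by auto
    show "\<exists>k<d. fst p k \<noteq> fst q k \<or> snd p k \<noteq> snd q k"
    proof (cases "i' = i")
      case True
      from ij \<phi> have "\<phi> i \<in> {1..n}" by simp
      with ij have "\<exists>k<d. h (\<phi> i) k \<noteq> h j k"
        by (intro distinct[rule_format]) auto
      then show ?thesis
        using p q True by auto
    next
      case False
      with i' ij have "\<exists>k<d. h i' k \<noteq> h i k"
        by (intro distinct[rule_format])
      then show ?thesis
        using p q by auto
    qed
  qed
  have "finite N"
    unfolding N_def by (rule finite_imageI, rule finite_subset[of _ "{1..n} \<times> {1..n}"]) auto
  moreover have "finite P" "P \<noteq> {}"
    using \<open>n \<ge> 1\<close> by (auto simp: P_def)
  ultimately obtain d' a W b where "d' \<ge> 1"
    and pos: "\<forall>p\<in>P. 0 < gatv2_score c d d' a W b (fst p) (snd p)"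
    and zero: "\<forall>q\<in>N. gatv2_score c d d' a W b (fst q) (snd q) = 0"
    using gatv2_bump_indicator[OF \<open>c < 1\<close> _ \<open>finite N\<close> _ separated] by auto
  have "gatv2_score c d d' a W b (h i) (h j) < gatv2_score c d d' a W b (h i) (h (\<phi> i))"
    if "i \<in> {1..n}" "j \<in> {1..n}" "j \<noteq> \<phi> i" for i j
  proof -
    have "(h i, h (\<phi> i)) \<in> P"
      using that by (simp add: P_def)
    moreover have "(h i, h j) \<in> N"
      unfolding N_def by (rule image_eqI[of _ _ "(i, j)"]) (use that in auto)
    ultimately show ?thesis
      using pos zero by fastforce
  qed
  with \<open>d' \<ge> 1\<close> show ?thesis
    by (intro exI[of _ d'] exI[of _ a] exI[of _ W] exI[of _ b]) auto
qed

lemma attn_coeff_strict_mono: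
  assumes "n \<ge> 1" and "e (h i) (h j) < e (h i) (h j')"
  shows "attn_coeff e n h i j < attn_coeff e n h i j'"
proof -
  have "0 < (\<Sum>j''\<in>{1..n}. exp (e (h i) (h j'')))"
    using assms(1) by (intro sum_pos) auto
  with assms(2) show ?thesis
    unfolding attn_coeff_def by (simp add: divide_strict_right_mono)
qed

theorem theorem2:
  fixes c :: real and d n :: nat and h :: "nat \<Rightarrow> nat \<Rightarrow> real"
  assumes "0 < c" and "c < 1"
    and "d \<ge> 1" and "n \<ge> 1"
    and "\<forall>i\<in>{1..n}. \<forall>j\<in>{1..n}. i \<noteq> j \<longrightarrow> (\<exists>k<d. h i k \<noteq> h j k)"
  shows "computes_dynamic_scoring (gatv2_family c d) n h n h
    \<and> (\<forall>\<phi>. (\<forall>i\<in>{1..n}. \<phi> i \<in> {1..n}) \<longrightarrow>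
         (\<exists>d' a W b. d' \<ge> 1 \<and>
            (\<forall>i\<in>{1..n}. \<forall>j\<in>{1..n}. j \<noteq> \<phi> i \<longrightarrow>
               gatv2_score c d d' a W b (h i) (h (\<phi> i)) > gatv2_score c d d' a W b (h i) (h j)
             \<and> attn_coeff (gatv2_score c d d' a W b) n h i (\<phi> i)
                 > attn_coeff (gatv2_score c d d' a W b) n h i j)))"
proof -
  note params = gatv2_dynamic_scoring_params[OF assms(2,4,5)]
  have "computes_dynamic_scoring (gatv2_family c d) n h n h"
    unfolding computes_dynamic_scoring_def
  proof (intro allI impI)
    fix \<phi> :: "nat \<Rightarrow> nat"
    assume "\<forall>i\<in>{1..n}. \<phi> i \<in> {1..n}"
    from params[OF this] obtain d' a W b where "d' \<ge> 1"
      and "\<forall>i\<in>{1..n}. \<forall>j\<in>{1..n}. j \<noteq> \<phi> i \<longrightarrow>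
             gatv2_score c d d' a W b (h i) (h (\<phi> i)) > gatv2_score c d d' a W b (h i) (h j)"
      by (elim exE conjE)
    then show "\<exists>f\<in>gatv2_family c d. \<forall>i\<in>{1..n}. \<forall>j\<in>{1..n}.
                 j \<noteq> \<phi> i \<longrightarrow> f (h i) (h (\<phi> i)) > f (h i) (h j)"
      by (intro bexI[of _ "gatv2_score c d d' a W b"]) (auto simp: gatv2_family_def)
  qed
  moreover have "\<exists>d' a W b. d' \<ge> 1 \<and>
      (\<forall>i\<in>{1..n}. \<forall>j\<in>{1..n}. j \<noteq> \<phi> i \<longrightarrow>
         gatv2_score c d d' a W b (h i) (h (\<phi> i)) > gatv2_score c d d' a W b (h i) (h j)
       \<and> attn_coeff (gatv2_score c d d' a W b) n h i (\<phi> i)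
           > attn_coeff (gatv2_score c d d' a W b) n h i j)"
    if "\<forall>i\<in>{1..n}. \<phi> i \<in> {1..n}" for \<phi>
    using params[OF that] attn_coeff_strict_mono[OF assms(4)]
    by (elim exE conjE, intro exI conjI) auto
  ultimately show ?thesis by auto
qed

end
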